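(* In a minimally non-perfectly divisible graph $G$, every vertex belongs to a clique of size $\omega(G)$.
   Context: All graphs are finite and simple. For $S\subseteq V(G)$, $G[S]$ is the subgraph induced by $S$. $\omega(G)$ is the number of vertices in a largest clique of $G$ and $\chi(G)$ the chromatic number. A graph $G$ is perfect if $\chi(H)=\omega(H)$ for every induced subgraph $H$ of $G$. A partition $(A,B)$ of $V(G)$ is good if $G[A]$ is perfect and $\omega(G[B])<\omega(G)$. A graph $G$ is perfectly divisible if every induced subgraph $H$ of $G$ with at least one edge admits a good partition (of $V(H)$). A graph is minimally non-perfectly divisible if it is not perfectly divisible but each of its proper induced subgraphs is perfectly divisible. *)

theory Defs
  imports Main
begin

text \<open>A finite simple graph is given by a finite vertex set V and a symmetric,
irreflexive adjacency relation E (only its restriction to V matters).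
The induced subgraph on S \<subseteq> V is (S, E).\<close>

definition simple_graph :: "'a set \<Rightarrow> ('a \<Rightarrow> 'a \<Rightarrow> bool) \<Rightarrow> bool" where
  "simple_graph V E \<longleftrightarrow> finite V \<and> (\<forall>x\<in>V. \<forall>y\<in>V. E x y \<longleftrightarrow> E y x) \<and> (\<forall>x\<in>V. \<not> E x x)"

definition clique :: "'a set \<Rightarrow> ('a \<Rightarrow> 'a \<Rightarrow> bool) \<Rightarrow> 'a set \<Rightarrow> bool" where
  "clique V E K \<longleftrightarrow> K \<subseteq> V \<and> (\<forall>x\<in>K. \<forall>y\<in>K. x \<noteq> y \<longrightarrow> E x y)"

definition clique_number :: "'a set \<Rightarrow> ('a \<Rightarrow> 'a \<Rightarrow> bool) \<Rightarrow> nat" where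
  "clique_number V E = Max {card K | K. clique V E K}"

definition colourable :: "'a set \<Rightarrow> ('a \<Rightarrow> 'a \<Rightarrow> bool) \<Rightarrow> nat \<Rightarrow> bool" where
  "colourable V E k \<longleftrightarrow> (\<exists>c :: 'a \<Rightarrow> nat. (\<forall>x\<in>V. c x < k) \<and>
       (\<forall>x\<in>V. \<forall>y\<in>V. E x y \<longrightarrow> c x \<noteq> c y))"

definition chromatic_number :: "'a set \<Rightarrow> ('a \<Rightarrow> 'a \<Rightarrow> bool) \<Rightarrow> nat" where
  "chromatic_number V E = (LEAST k. colourable V E k)"

definition perfect :: "'a set \<Rightarrow> ('a \<Rightarrow> 'a \<Rightarrow> bool) \<Rightarrow> bool" where
  "perfect V E \<longleftrightarrow> (\<forall>S\<subseteq>V. chromatic_number S E = clique_number S E)"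

definition good_partition :: "'a set \<Rightarrow> ('a \<Rightarrow> 'a \<Rightarrow> bool) \<Rightarrow> 'a set \<Rightarrow> 'a set \<Rightarrow> bool" where
  "good_partition V E A B \<longleftrightarrow> A \<union> B = V \<and> A \<inter> B = {} \<and>
     perfect A E \<and> clique_number B E < clique_number V E"

definition has_edge :: "'a set \<Rightarrow> ('a \<Rightarrow> 'a \<Rightarrow> bool) \<Rightarrow> bool" where
  "has_edge V E \<longleftrightarrow> (\<exists>x\<in>V. \<exists>y\<in>V. E x y)"

definition perfectly_divisible :: "'a set \<Rightarrow> ('a \<Rightarrow> 'a \<Rightarrow> bool) \<Rightarrow> bool" where
  "perfectly_divisible V E \<longleftrightarrow>
     (\<forall>S\<subseteq>V. has_edge S E \<longrightarrow> (\<exists>A B. good_partition S E A B))"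

definition minimally_non_pd :: "'a set \<Rightarrow> ('a \<Rightarrow> 'a \<Rightarrow> bool) \<Rightarrow> bool" where
  "minimally_non_pd V E \<longleftrightarrow> \<not> perfectly_divisible V E \<and>
     (\<forall>S. S \<subset> V \<longrightarrow> perfectly_divisible S E)"

end

theory Submission
  imports Defs
begin

text \<open>Suppose v lies in no maximum clique. Every maximum clique of G then survives in G - v,
so \<omega>(G - v) = \<omega>(G) \<ge> 2 and, by minimality, G - v has a good partition (A, B).
Adding v to B creates no clique of size \<omega>(G): such a clique would either contain v or
lie in B. Hence (A, B \<union> {v}) is a good partition of G, whereas a minimally
non-perfectly divisible graph has none.\<close>

lemma finite_clique_sizes: "finite V \<Longrightarrow> finite {card K | K. clique V E K}"
proof -
  assume "finite V"
  moreover have "{card K | K. clique V E K} \<subseteq> card ` Pow V"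
    by (auto simp: clique_def)
  ultimately show ?thesis
    using finite_subset by blast
qed

lemma card_le_clique_number: "finite V \<Longrightarrow> clique V E K \<Longrightarrow> card K \<le> clique_number V E"
  unfolding clique_number_def using finite_clique_sizes by (intro Max_ge) auto

lemma maximum_clique_exists:
  assumes "finite V"
  obtains K where "clique V E K" "card K = clique_number V E"
proof -
  have "{card K | K. clique V E K} \<noteq> {}"
    by (auto simp: clique_def)
  then have "clique_number V E \<in> {card K | K. clique V E K}"
    unfolding clique_number_def using Max_in finite_clique_sizes[OF assms] by blast
  then show ?thesis
    using that by auto
qed

lemma clique_mono: "clique S E K \<Longrightarrow> S \<subseteq> T \<Longrightarrow> clique T E K"
  by (auto simp: clique_def)

lemma clique_number_mono:
  assumes "finite T" "S \<subseteq> T"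
  shows "clique_number S E \<le> clique_number T E"
proof -
  obtain K where "clique S E K" "card K = clique_number S E"
    using maximum_clique_exists finite_subset[OF assms(2,1)] by blast
  then show ?thesis
    using card_le_clique_number[OF assms(1)] clique_mono[OF _ assms(2)] by metis
qed

lemma simple_graph_subset: "simple_graph V E \<Longrightarrow> S \<subseteq> V \<Longrightarrow> simple_graph S E"
  by (auto simp: simple_graph_def finite_subset)

lemma has_edge_iff_clique_number_ge_2:
  assumes "simple_graph V E"
  shows "has_edge V E \<longleftrightarrow> 2 \<le> clique_number V E"
proof
  assume "has_edge V E"
  then obtain x y where xy: "x \<in> V" "y \<in> V" "E x y"
    by (auto simp: has_edge_def)
  with assms have "x \<noteq> y" "clique V E {x, y}"
    by (auto simp: simple_graph_def clique_def)
  then show "2 \<le> clique_number V E"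
    using card_le_clique_number assms by (fastforce simp: simple_graph_def)
next
  assume "2 \<le> clique_number V E"
  moreover obtain K where "clique V E K" "card K = clique_number V E"
    using maximum_clique_exists assms by (auto simp: simple_graph_def)
  ultimately obtain x y where "x \<in> K" "y \<in> K" "x \<noteq> y"
    by (metis One_nat_def card.infinite card_le_Suc0_iff_eq not_less_eq_eq numeral_2_eq_2 zero_le)
  with \<open>clique V E K\<close> show "has_edge V E"
    unfolding has_edge_def clique_def by blast
qed

lemma minimally_non_pd_no_good_partition:
  assumes "minimally_non_pd V E"
  shows "has_edge V E" "\<not> good_partition V E A B"
proof -
  obtain S where S: "S \<subseteq> V" "has_edge S E" "\<nexists>A B. good_partition S E A B"
    using assms by (auto simp: minimally_non_pd_def perfectly_divisible_def)
  have "S = V"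
  proof (rule ccontr)
    assume "S \<noteq> V"
    with S(1) assms have "perfectly_divisible S E"
      by (auto simp: minimally_non_pd_def)
    with S show False
      by (auto simp: perfectly_divisible_def)
  qed
  with S show "has_edge V E" "\<not> good_partition V E A B"
    by auto
qed

lemma clique_number_delete_vertex:
  assumes "finite V"
    and avoid: "\<And>K. clique V E K \<Longrightarrow> card K = clique_number V E \<Longrightarrow> v \<notin> K"
  shows "clique_number (V - {v}) E = clique_number V E"
proof (rule antisym)
  show "clique_number (V - {v}) E \<le> clique_number V E"
    using clique_number_mono assms(1) by blast
  obtain K where K: "clique V E K" "card K = clique_number V E"
    using maximum_clique_exists assms(1) by blast
  then have "clique (V - {v}) E K"
    using avoid by (auto simp: clique_def)
  then have "card K \<le> clique_number (V - {v}) E"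
    using card_le_clique_number assms(1) by blast
  with K(2) show "clique_number V E \<le> clique_number (V - {v}) E"
    by simp
qed

lemma clique_number_insert_less:
  assumes "finite V" "B \<subseteq> V" "v \<in> V"
    and less: "clique_number B E < clique_number V E"
    and avoid: "\<And>K. clique V E K \<Longrightarrow> card K = clique_number V E \<Longrightarrow> v \<notin> K"
  shows "clique_number (insert v B) E < clique_number V E"
proof -
  have fin: "finite (insert v B)"
    using assms(1,2) finite_subset by blast
  obtain K where K: "clique (insert v B) E K" "card K = clique_number (insert v B) E"
    using maximum_clique_exists[OF fin] by blast
  have KV: "clique V E K"
    using K(1) assms(2,3) clique_mono by blast
  show ?thesis
  proof (cases "v \<in> K")
    case True
    then show ?thesis
      using K(2) KV avoid card_le_clique_number[OF assms(1) KV] by fastforce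
  next
    case False
    then have "clique B E K"
      using K(1) by (auto simp: clique_def)
    then show ?thesis
      using K(2) less card_le_clique_number finite_subset[OF assms(2,1)] by fastforce
  qed
qed

theorem lemma2:
  fixes V :: "'a set" and E :: "'a \<Rightarrow> 'a \<Rightarrow> bool"
  assumes "simple_graph V E"
    and "minimally_non_pd V E"
    and "v \<in> V"
  shows "\<exists>K. clique V E K \<and> v \<in> K \<and> card K = clique_number V E"
proof (rule ccontr)
  assume "\<not> ?thesis"
  then have avoid: "\<And>K. clique V E K \<Longrightarrow> card K = clique_number V E \<Longrightarrow> v \<notin> K"
    by blast
  have fin: "finite V"
    using assms(1) by (simp add: simple_graph_def)
  have same_cn: "clique_number (V - {v}) E = clique_number V E"
    using clique_number_delete_vertex[OF fin avoid] .
  have "2 \<le> clique_number (V - {v}) E"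
    using minimally_non_pd_no_good_partition(1)[OF assms(2)] same_cn
      has_edge_iff_clique_number_ge_2[OF assms(1)] by simp
  then have "has_edge (V - {v}) E"
    using has_edge_iff_clique_number_ge_2 simple_graph_subset[OF assms(1)] by blast
  moreover have "perfectly_divisible (V - {v}) E"
    using assms(2,3) by (auto simp: minimally_non_pd_def)
  ultimately obtain A B where AB: "good_partition (V - {v}) E A B"
    by (auto simp: perfectly_divisible_def)
  then have "clique_number (insert v B) E < clique_number V E"
    using clique_number_insert_less[OF fin _ assms(3) _ avoid] same_cn
    by (auto simp: good_partition_def)
  with AB assms(3) have "good_partition V E A (insert v B)"
    by (auto simp: good_partition_def)
  then show False
    using minimally_non_pd_no_good_partition(2)[OF assms(2)] by blast
qed

end
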